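(* Consider the $r$-cGA (without frequency borders) maximizing \textit{G}-OneMax on $\{0,\dots,r-1\}^n$, and suppose that at some time the frequency $p^{(t)}_{i,r-1}$ has reached a value of at least $k/r$, where $k>0$. Suppose $K\ge c\,r^2\sqrt{n}\log n$ for a sufficiently large constant $c$, and $K$ and $r$ are bounded by polynomials in $n$. Then, for a constant $c'>0$, the probability that $p^{(t)}_{i,r-1}$ drops below $k/r-1/(2r)$ within the next $T^{*}=c'Kr\sqrt{n}(\log r+\log n)$ iterations is at most $n^{-c''}$, where $c''\ge K/(288r^2\sqrt{n}\ln n)$.
   Context: Let $n\ge 1$, $r\ge 2$ be integers and $K>0$. \textit{G}-OneMax$(x)=\sum_{i=1}^n x_i$ for $x\in\{0,\dots,r-1\}^n$. The $r$-valued compact genetic algorithm ($r$-cGA) with parameter $K$ maintains frequencies $p^{(t)}_{i,j}$ for $i\in\{1,\dots,n\}$, $j\in\{0,\dots,r-1\}$, initially all $1/r$. In iteration $t$ it samples two strings $x,y$ independently, each position $i$ of each string taking value $j$ with probability $p^{(t)}_{i,j}$ independently of other positions; if $f(x)<f(y)$ then $x$ and $y$ are swapped; then for all $i,j$, $p^{(t+1)}_{i,j}=p^{(t)}_{i,j}+\frac1K(\mathbf 1[x_i=j]-\mathbf 1[y_i=j])$. Here $f$ is the function to be maximized. *)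

theory Defs
  imports "HOL-Probability.Probability"
begin

text \<open>Positions are indexed 0..n-1 and values 0..r-1. A search point is a function
  nat => nat (only positions below n matter); a frequency state is
  p :: nat => nat => real, p i j = frequency of value j at position i.\<close>

definition gonemax :: "nat \<Rightarrow> (nat \<Rightarrow> nat) \<Rightarrow> real" where
  "gonemax n x = (\<Sum>i<n. real (x i))"

text \<open>Distribution of one position: value j with probability q j (j < r).
  If q is not a probability vector (cannot be sampled from), an arbitrary fallback is used.\<close>
definition pos_pmf :: "nat \<Rightarrow> (nat \<Rightarrow> real) \<Rightarrow> nat pmf" where
  "pos_pmf r q = (if (\<forall>j<r. 0 \<le> q j) \<and> (\<Sum>j<r. q j) = 1
                   then embed_pmf (\<lambda>j. if j < r then q j else 0) else return_pmf 0)"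

definition sample_pmf :: "nat \<Rightarrow> nat \<Rightarrow> (nat \<Rightarrow> nat \<Rightarrow> real) \<Rightarrow> (nat \<Rightarrow> nat) pmf" where
  "sample_pmf n r p = Pi_pmf {..<n} 0 (\<lambda>i. pos_pmf r (p i))"

definition cga_step :: "nat \<Rightarrow> nat \<Rightarrow> real \<Rightarrow> ((nat \<Rightarrow> nat) \<Rightarrow> real)
    \<Rightarrow> (nat \<Rightarrow> nat \<Rightarrow> real) \<Rightarrow> (nat \<Rightarrow> nat \<Rightarrow> real) pmf" where
  "cga_step n r K f p =
     bind_pmf (sample_pmf n r p) (\<lambda>x0. bind_pmf (sample_pmf n r p) (\<lambda>y0.
       let x = (if f x0 < f y0 then y0 else x0);
           y = (if f x0 < f y0 then x0 else y0)
       in return_pmf (\<lambda>i j. p i j + ((if x i = j then 1 else 0) - (if y i = j then 1 else 0)) / K)))"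

definition cga_init :: "nat \<Rightarrow> nat \<Rightarrow> nat \<Rightarrow> real" where
  "cga_init r = (\<lambda>i j. if j < r then 1 / real r else 0)"

fun cga_run :: "nat \<Rightarrow> nat \<Rightarrow> real \<Rightarrow> ((nat \<Rightarrow> nat) \<Rightarrow> real)
    \<Rightarrow> (nat \<Rightarrow> nat \<Rightarrow> real) \<Rightarrow> nat \<Rightarrow> (nat \<Rightarrow> nat \<Rightarrow> real) pmf" where
  "cga_run n r K f p 0 = return_pmf p"
| "cga_run n r K f p (Suc t) = bind_pmf (cga_run n r K f p t) (cga_step n r K f)"

fun cga_traj :: "nat \<Rightarrow> nat \<Rightarrow> real \<Rightarrow> ((nat \<Rightarrow> nat) \<Rightarrow> real)
    \<Rightarrow> (nat \<Rightarrow> nat \<Rightarrow> real) \<Rightarrow> nat \<Rightarrow> (nat \<Rightarrow> nat \<Rightarrow> real) list pmf" where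
  "cga_traj n r K f p 0 = return_pmf [p]"
| "cga_traj n r K f p (Suc t) =
     bind_pmf (cga_traj n r K f p t) (\<lambda>ps. map_pmf (\<lambda>q. ps @ [q]) (cga_step n r K f (last ps)))"

end

theory Submission
  imports Defs
begin

text \<open>Fix the position i and let X be the frequency of value r - 1 there. With
  \<lambda> = 1 / (12 r sqrt n), the process exp (- \<lambda> K X) is a supermartingale. X changes in a step
  only if exactly one of the two offspring has value r - 1 at position i. Averaging over the
  exchange of the two offspring, the second-order term of the exponential is paid for by the
  selection bias towards r - 1; averaging over the exchange of the sums of the other positions
  shows that this bias is at least the probability that these sums tie. By Hoeffding's
  inequality the sum of the other positions falls into a window of width about 2 r sqrt n with
  probability at least 1/2, so by Cauchy-Schwarz the tie probability is at least \<lambda>. Markov's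
  inequality and a union bound over the T + 1 time steps give the failure probability
  (T + 1) exp (- K / (24 r^2 sqrt n)), and K \<ge> c r^2 sqrt n ln n makes this smaller than the
  required power of n.\<close>

lemma pair_pmf_interchange:
  "map_pmf (\<lambda>((a, b), (c, d)). ((a, c), (b, d))) (pair_pmf (pair_pmf A B) (pair_pmf C D))
     = pair_pmf (pair_pmf A C) (pair_pmf B D)"
  unfolding pair_pmf_def map_pmf_def
  by (simp add: bind_assoc_pmf bind_return_pmf)
    (subst bind_commute_pmf, simp add: bind_assoc_pmf bind_return_pmf)

lemma map_pmf_swap_pair_pmf_self: "map_pmf prod.swap (pair_pmf X X) = pair_pmf X X"
  by (subst (2) pair_commute_pmf) (auto intro: map_pmf_cong)

lemma integrable_measure_pmf_bounded:
  fixes f :: "'a \<Rightarrow> real"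
  assumes "\<And>x. \<bar>f x\<bar> \<le> B"
  shows "integrable (measure_pmf M) f"
  by (rule measure_pmf.integrable_const_bound[where B = B]) (use assms in auto)

lemma expectation_symmetrize:
  fixes f :: "'a \<Rightarrow> real"
  assumes inv: "map_pmf g M = M" and bdd: "\<And>x. \<bar>f x\<bar> \<le> B"
  shows "2 * measure_pmf.expectation M f = measure_pmf.expectation M (\<lambda>x. f x + f (g x))"
proof -
  have "measure_pmf.expectation M (\<lambda>x. f (g x)) = measure_pmf.expectation (map_pmf g M) f"
    by simp
  also have "\<dots> = measure_pmf.expectation M f"
    by (simp only: inv)
  finally have "measure_pmf.expectation M (\<lambda>x. f (g x)) = measure_pmf.expectation M f" .
  moreover have "integrable M f" "integrable M (\<lambda>x. f (g x))"
    using bdd by (auto intro: integrable_measure_pmf_bounded)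
  ultimately show ?thesis by simp
qed

lemma collision_prob_ge:
  assumes "finite I" "I \<noteq> {}"
  shows "measure_pmf.prob M I ^ 2 / card I \<le> measure_pmf.prob (pair_pmf M M) {z. fst z = snd z}"
proof -
  have "measure_pmf.prob M I ^ 2 = (\<Sum>s\<in>I. pmf M s) ^ 2"
    using assms by (simp add: measure_measure_pmf_finite)
  also have "\<dots> \<le> (\<Sum>s\<in>I. pmf M s ^ 2) * card I"
    by (rule sum_squared_le_sum_of_squares)
  finally have "measure_pmf.prob M I ^ 2 / card I \<le> (\<Sum>s\<in>I. pmf M s ^ 2)"
    using assms by (simp add: divide_le_eq card_gt_0_iff)
  also have "\<dots> = measure_pmf.prob (pair_pmf M M) ((\<lambda>s. (s, s)) ` I)"
    using assms by (simp add: measure_measure_pmf_finite sum.reindex inj_on_def pmf_pair power2_eq_square)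
  also have "\<dots> \<le> measure_pmf.prob (pair_pmf M M) {z. fst z = snd z}"
    by (rule measure_pmf.finite_measure_mono) auto
  finally show ?thesis .
qed

section \<open>The exponential drift of one comparison\<close>

lemma exp_plus_exp_minus_le:
  fixes l \<rho> :: real
  assumes l: "0 \<le> l" and \<rho>: "exp l - 1 \<le> 2 * \<rho>"
  shows "exp l + exp (- l) - 2 \<le> (exp l - exp (- l)) * \<rho>"
proof -
  define y where "y = exp l"
  have y: "1 \<le> y" using l by (simp add: y_def)
  have "y - 1 \<le> (y + 1) * \<rho>"
    using \<rho> y mult_right_mono[of 2 "y + 1" \<rho>] unfolding y_def[symmetric] by linarith
  then have "(y - 1) * (y - 1) \<le> (y - 1) * ((y + 1) * \<rho>)"
    using y by (intro mult_left_mono) auto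
  then have "(y - 1) * (y - 1) / y \<le> (y * y - 1) / y * \<rho>"
    using y by (simp add: divide_right_mono algebra_simps)
  moreover have "exp l + exp (- l) - 2 = (y - 1) * (y - 1) / y"
    using y by (simp add: y_def exp_minus field_simps)
  moreover have "exp l - exp (- l) = (y * y - 1) / y"
    using y by (simp add: y_def exp_minus field_simps)
  ultimately show ?thesis by simp
qed

definition top_indicator :: "nat \<Rightarrow> nat \<Rightarrow> real" where
  "top_indicator r c = (if c = r - 1 then 1 else 0)"

definition top_differs :: "nat \<Rightarrow> (nat \<times> nat) set" where
  "top_differs r = {c. (fst c = r - 1) \<noteq> (snd c = r - 1)}"

text \<open>A duel of two offspring is encoded as ((c1, c2), (s1, s2)): c1 and c2 are their values
  at the observed position, s1 and s2 the sums of their values at all other positions. As in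
  cga_step, the first offspring wins ties.\<close>

definition duel_gain :: "nat \<Rightarrow> (nat \<times> nat) \<times> (nat \<times> nat) \<Rightarrow> real" where
  "duel_gain r = (\<lambda>((c1, c2), (s1, s2)).
     if c1 + s1 < c2 + s2 then top_indicator r c2 - top_indicator r c1
     else top_indicator r c1 - top_indicator r c2)"

definition duel_bias :: "nat \<Rightarrow> (nat \<times> nat) \<times> (nat \<times> nat) \<Rightarrow> real" where
  "duel_bias r = (\<lambda>((c1, c2), (s1, s2)).
     (top_indicator r c1 - top_indicator r c2) * sgn (real (c1 + s1) - real (c2 + s2)))"

lemma abs_duel_bias_le_1: "\<bar>duel_bias r z\<bar> \<le> 1"
proof -
  have "\<bar>top_indicator r c1 - top_indicator r c2\<bar> \<le> 1" for c1 c2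
    by (simp add: top_indicator_def)
  moreover have "\<bar>sgn x\<bar> \<le> (1::real)" for x
    by (simp add: abs_sgn_eq)
  ultimately show ?thesis
    by (auto simp: duel_bias_def abs_mult intro: mult_le_one split: prod.splits)
qed

lemma abs_exp_duel_gain_le: "0 \<le> l \<Longrightarrow> \<bar>exp (- l * duel_gain r z)\<bar> \<le> exp l"
  by (auto simp: duel_gain_def top_indicator_def split: prod.splits)

lemma exp_duel_gain_swap_sum:
  "exp (- l * duel_gain r z) + exp (- l * duel_gain r (map_prod prod.swap prod.swap z))
     = 2 + (exp l + exp (- l) - 2) * indicator (top_differs r \<times> UNIV) z
         - (exp l - exp (- l)) * duel_bias r z"
proof -
  obtain c1 c2 s1 s2 where z: "z = ((c1, c2), (s1, s2))" by (metis prod.collapse)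
  consider "c1 + s1 < c2 + s2" | "c1 + s1 = c2 + s2" | "c2 + s2 < c1 + s1" by linarith
  then show ?thesis
    by cases (auto simp: z duel_gain_def duel_bias_def top_indicator_def top_differs_def
      indicator_def simp del: of_nat_add)
qed

lemma duel_bias_swap_snd_sum_ge:
  assumes "c1 < r" "c2 < r"
  shows "2 * indicator (top_differs r \<times> {s. fst s = snd s}) ((c1, c2), (s1, s2))
      \<le> duel_bias r ((c1, c2), (s1, s2)) + duel_bias r ((c1, c2), (s2, s1))"
proof -
  consider "(c1 = r - 1) = (c2 = r - 1)" | "c1 = r - 1" "c2 < c1" | "c2 = r - 1" "c1 < c2"
    using assms by linarith
  then show ?thesis
  proof cases
    case 1
    then show ?thesis by (simp add: duel_bias_def top_indicator_def top_differs_def)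
  qed (auto simp: duel_bias_def top_indicator_def top_differs_def indicator_def sgn_if)
qed

lemma expectation_exp_duel_gain:
  fixes \<nu> \<mu> :: "nat pmf"
  assumes l: "0 \<le> l"
  shows "2 * measure_pmf.expectation (pair_pmf (pair_pmf \<nu> \<nu>) (pair_pmf \<mu> \<mu>))
      (\<lambda>z. exp (- l * duel_gain r z))
    = 2 + (exp l + exp (- l) - 2) * measure_pmf.prob (pair_pmf \<nu> \<nu>) (top_differs r)
        - (exp l - exp (- l))
          * measure_pmf.expectation (pair_pmf (pair_pmf \<nu> \<nu>) (pair_pmf \<mu> \<mu>)) (duel_bias r)"
proof -
  define Y where "Y = pair_pmf (pair_pmf \<nu> \<nu>) (pair_pmf \<mu> \<mu>)"
  have swap: "map_pmf (map_prod prod.swap prod.swap) Y = Y"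
    by (simp add: Y_def map_prod_def map_pair map_pmf_swap_pair_pmf_self)
  have "2 * measure_pmf.expectation Y (\<lambda>z. exp (- l * duel_gain r z))
      = measure_pmf.expectation Y (\<lambda>z. 2 + (exp l + exp (- l) - 2) * indicator (top_differs r \<times> UNIV) z
          - (exp l - exp (- l)) * duel_bias r z)"
    unfolding expectation_symmetrize[OF swap abs_exp_duel_gain_le[OF l]] exp_duel_gain_swap_sum ..
  also have "\<dots> = 2 + (exp l + exp (- l) - 2) * measure_pmf.prob Y (top_differs r \<times> UNIV)
      - (exp l - exp (- l)) * measure_pmf.expectation Y (duel_bias r)"
  proof -
    have "integrable Y (indicator (top_differs r \<times> UNIV) :: _ \<Rightarrow> real)"
      by (rule integrable_measure_pmf_bounded[where B = 1]) (simp add: indicator_def)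
    moreover have "integrable Y (duel_bias r)"
      by (rule integrable_measure_pmf_bounded) (rule abs_duel_bias_le_1)
    ultimately show ?thesis by simp
  qed
  also have "measure_pmf.prob Y (top_differs r \<times> UNIV) = measure_pmf.prob (pair_pmf \<nu> \<nu>) (top_differs r)"
    by (simp add: Y_def measure_pmf_prob_product countableI_type)
  finally show ?thesis
    unfolding Y_def .
qed

lemma expectation_duel_bias_ge:
  fixes \<nu> \<mu> :: "nat pmf"
  assumes \<nu>: "set_pmf \<nu> \<subseteq> {..<r}"
  shows "measure_pmf.prob (pair_pmf \<nu> \<nu>) (top_differs r) * measure_pmf.prob (pair_pmf \<mu> \<mu>) {s. fst s = snd s}
    \<le> measure_pmf.expectation (pair_pmf (pair_pmf \<nu> \<nu>) (pair_pmf \<mu> \<mu>)) (duel_bias r)"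
proof -
  define Y where "Y = pair_pmf (pair_pmf \<nu> \<nu>) (pair_pmf \<mu> \<mu>)"
  define S where "S = top_differs r \<times> {s :: nat \<times> nat. fst s = snd s}"
  have "2 * (measure_pmf.prob (pair_pmf \<nu> \<nu>) (top_differs r)
        * measure_pmf.prob (pair_pmf \<mu> \<mu>) {s. fst s = snd s})
      = measure_pmf.expectation Y (\<lambda>z. 2 * indicator S z)"
    by (simp add: Y_def S_def measure_pmf_prob_product countableI_type)
  also have "\<dots> \<le> measure_pmf.expectation Y (\<lambda>z. duel_bias r z + duel_bias r (map_prod id prod.swap z))"
  proof (rule integral_mono_AE)
    show "AE z in measure_pmf Y. 2 * indicator S z \<le> duel_bias r z + duel_bias r (map_prod id prod.swap z)"
    proof (rule AE_pmfI)
      fix z assume "z \<in> set_pmf Y"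
      then obtain c1 c2 s1 s2 where "z = ((c1, c2), (s1, s2))" "c1 < r" "c2 < r"
        using \<nu> by (fastforce simp: Y_def)
      then show "2 * indicator S z \<le> duel_bias r z + duel_bias r (map_prod id prod.swap z)"
        by (simp add: S_def duel_bias_swap_snd_sum_ge)
    qed
    show "integrable Y (\<lambda>z. 2 * indicator S z :: real)"
      by (rule integrable_measure_pmf_bounded[where B = 2]) (simp add: indicator_def)
    show "integrable Y (\<lambda>z. duel_bias r z + duel_bias r (map_prod id prod.swap z))"
      by (rule Bochner_Integration.integrable_add; rule integrable_measure_pmf_bounded[where B = 1];
        rule abs_duel_bias_le_1)
  qed
  also have "\<dots> = 2 * measure_pmf.expectation Y (duel_bias r)"
  proof -
    have swap_snd: "map_pmf (map_prod id prod.swap) Y = Y"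
      by (simp add: Y_def map_prod_def map_pair map_pmf_swap_pair_pmf_self)
    show ?thesis
      unfolding expectation_symmetrize[OF swap_snd abs_duel_bias_le_1] ..
  qed
  finally show ?thesis
    unfolding Y_def by simp
qed

lemma expectation_exp_duel_gain_le_1:
  fixes \<nu> \<mu> :: "nat pmf"
  assumes \<nu>: "set_pmf \<nu> \<subseteq> {..<r}" and l: "0 \<le> l"
    and l_\<rho>: "exp l - 1 \<le> 2 * measure_pmf.prob (pair_pmf \<mu> \<mu>) {s. fst s = snd s}"
  shows "measure_pmf.expectation (pair_pmf (pair_pmf \<nu> \<nu>) (pair_pmf \<mu> \<mu>))
    (\<lambda>z. exp (- l * duel_gain r z)) \<le> 1"
proof -
  define P where "P = measure_pmf.prob (pair_pmf \<nu> \<nu>) (top_differs r)"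
  define \<rho> where "\<rho> = measure_pmf.prob (pair_pmf \<mu> \<mu>) {s. fst s = snd s}"
  define bias where "bias = measure_pmf.expectation (pair_pmf (pair_pmf \<nu> \<nu>) (pair_pmf \<mu> \<mu>)) (duel_bias r)"
  have "exp l + exp (- l) - 2 \<le> (exp l - exp (- l)) * \<rho>"
    using l l_\<rho> unfolding \<rho>_def by (rule exp_plus_exp_minus_le)
  then have "(exp l + exp (- l) - 2) * P \<le> (exp l - exp (- l)) * \<rho> * P"
    by (rule mult_right_mono) (simp add: P_def)
  moreover have "(exp l - exp (- l)) * (P * \<rho>) \<le> (exp l - exp (- l)) * bias"
    using expectation_duel_bias_ge[OF \<nu>, of \<mu>] l
    by (intro mult_left_mono) (auto simp: P_def \<rho>_def bias_def)
  ultimately show ?thesis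
    using expectation_exp_duel_gain[OF l, of \<nu> \<mu> r] unfolding P_def[symmetric] bias_def[symmetric]
    by (simp add: algebra_simps)
qed

section \<open>Ties between sums of independent bounded variables\<close>

lemma exp_minus_two_le_quarter: "exp (- 2 :: real) \<le> 1 / 4"
proof -
  have "2 \<le> exp (1::real)" using exp_ge_add_one_self[of 1] by simp
  then have "4 \<le> exp (1::real) * exp 1" using mult_mono[of 2 "exp 1" 2 "exp (1::real)"] by simp
  then show ?thesis by (simp add: exp_minus field_simps flip: exp_add)
qed

context
  fixes R :: "nat set" and n r :: nat and P :: "nat \<Rightarrow> nat pmf"
  assumes R: "finite R" "R \<noteq> {}" "card R \<le> n"
    and r: "2 \<le> r" and P: "\<And>j. j \<in> R \<Longrightarrow> set_pmf (P j) \<subseteq> {..<r}"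
begin

lemma one_le_mult_sqrt: "1 \<le> real r * sqrt n"
proof -
  have "0 < card R" using R by (simp add: card_gt_0_iff)
  then have "1 \<le> sqrt n" using R(3) by simp
  moreover have "1 \<le> real r" using r by simp
  ultimately show ?thesis using mult_mono[of 1 "real r" 1 "sqrt n"] by simp
qed

lemma Pi_pmf_sum_deviation_le_half:
  "\<exists>m. measure_pmf.prob (Pi_pmf R 0 P) {w. real r * sqrt n \<le> \<bar>real (\<Sum>j\<in>R. w j) - m\<bar>}
    \<le> 1 / 2"
proof -
  define W where "W = Pi_pmf R 0 P"
  define m where "m = (\<Sum>j\<in>R. measure_pmf.expectation W (\<lambda>w. real (w j)))"
  define \<epsilon> where "\<epsilon> = real r * sqrt n"
  interpret Hoeffding_ineq "measure_pmf W" R "\<lambda>j w. real (w j)" "\<lambda>_. 0" "\<lambda>_. real r - 1" m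
  proof unfold_locales
    show "finite R" by (rule R(1))
    show "prob_space.indep_vars (measure_pmf W) (\<lambda>_. borel) (\<lambda>j w. real (w j)) R"
      unfolding W_def
      by (rule prob_space.indep_vars_compose2[OF measure_pmf.prob_space_axioms
            indep_vars_Pi_pmf[OF R(1)]]) auto
    fix j assume j: "j \<in> R"
    show "AE w in measure_pmf W. real (w j) \<in> {0..real r - 1}"
    proof (rule AE_pmfI)
      fix w assume "w \<in> set_pmf W"
      then have "w j \<in> set_pmf (P j)"
        using j unfolding W_def set_Pi_pmf[OF R(1)] PiE_dflt_def by auto
      then show "real (w j) \<in> {0..real r - 1}"
        using P[OF j] by auto
    qed
  qed (simp only: m_def)
  have "(\<Sum>j\<in>R. (real r - 1 - 0)\<^sup>2) = card R * (real r - 1)\<^sup>2" by simp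
  also have "\<dots> \<le> n * (real r)\<^sup>2"
    using R r by (intro mult_mono power_mono) auto
  also have "\<dots> = \<epsilon>\<^sup>2" by (simp add: \<epsilon>_def power_mult_distrib)
  finally have var: "(\<Sum>j\<in>R. (real r - 1 - 0)\<^sup>2) \<le> \<epsilon>\<^sup>2" .
  have var_pos: "0 < (\<Sum>j\<in>R. (real r - 1 - 0)\<^sup>2)"
    using R r by (simp add: card_gt_0_iff)
  have "measure_pmf.prob W {w. \<epsilon> \<le> \<bar>(\<Sum>j\<in>R. real (w j)) - m\<bar>}
      \<le> 2 * exp (- 2 * \<epsilon>\<^sup>2 / (\<Sum>j\<in>R. (real r - 1 - 0)\<^sup>2))"
    using Hoeffding_ineq_abs_ge[of \<epsilon>] one_le_mult_sqrt var_pos by (simp add: \<epsilon>_def)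
  also have "\<dots> \<le> 2 * exp (- 2)"
  proof -
    have "1 \<le> \<epsilon>\<^sup>2 / (\<Sum>j\<in>R. (real r - 1 - 0)\<^sup>2)"
      using var var_pos by (simp add: le_divide_eq)
    then show ?thesis by simp
  qed
  also have "\<dots> \<le> 1 / 2"
    using exp_minus_two_le_quarter by simp
  finally show ?thesis
    unfolding W_def \<epsilon>_def by (intro exI[of _ m]) simp
qed

lemma Pi_pmf_sum_in_interval_ge_half:
  "\<exists>a. 1 / 2 \<le> measure_pmf.prob (map_pmf (\<lambda>w. \<Sum>j\<in>R. w j) (Pi_pmf R 0 P))
                 {a..<a + nat \<lceil>2 * real r * sqrt n\<rceil>}"
proof -
  obtain m where
    m: "measure_pmf.prob (Pi_pmf R 0 P) {w. real r * sqrt n \<le> \<bar>real (\<Sum>j\<in>R. w j) - m\<bar>} \<le> 1 / 2"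
    using Pi_pmf_sum_deviation_le_half by blast
  define S where "S = {w. real r * sqrt n \<le> \<bar>real (\<Sum>j\<in>R. w j) - m\<bar>}"
  define a where "a = nat \<lceil>m - real r * sqrt n\<rceil>"
  define I where "I = {a..<a + nat \<lceil>2 * real r * sqrt n\<rceil>}"
  have "- S \<subseteq> (\<lambda>w. \<Sum>j\<in>R. w j) -` I"
  proof
    fix w assume "w \<in> - S"
    moreover define s where "s = (\<Sum>j\<in>R. w j)"
    ultimately have s: "\<bar>real s - m\<bar> < real r * sqrt n" by (simp add: S_def)
    then have "\<lceil>m - real r * sqrt n\<rceil> \<le> int s"
      by (intro ceiling_le) (simp add: abs_less_iff)
    then have "a \<le> s" by (simp add: a_def nat_le_iff)
    moreover have "real s < real (a + nat \<lceil>2 * real r * sqrt n\<rceil>)"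
      using s unfolding a_def by (simp add: abs_less_iff) linarith
    ultimately show "w \<in> (\<lambda>w. \<Sum>j\<in>R. w j) -` I"
      by (simp add: I_def s_def[symmetric] del: of_nat_add)
  qed
  then have "measure_pmf.prob (Pi_pmf R 0 P) (- S)
      \<le> measure_pmf.prob (Pi_pmf R 0 P) ((\<lambda>w. \<Sum>j\<in>R. w j) -` I)"
    by (intro measure_pmf.finite_measure_mono) auto
  moreover have "measure_pmf.prob (Pi_pmf R 0 P) (- S) = 1 - measure_pmf.prob (Pi_pmf R 0 P) S"
    by (simp add: measure_pmf.prob_compl[symmetric] Compl_eq_Diff_UNIV)
  ultimately show ?thesis
    using m unfolding S_def[symmetric] I_def by (intro exI[of _ a]) simp
qed

lemma collision_prob_Pi_pmf_sum_ge:
  "1 / (12 * real r * sqrt n) \<le> measure_pmf.prob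
     (pair_pmf (map_pmf (\<lambda>w. \<Sum>j\<in>R. w j) (Pi_pmf R 0 P))
       (map_pmf (\<lambda>w. \<Sum>j\<in>R. w j) (Pi_pmf R 0 P)))
     {z. fst z = snd z}"
proof -
  define \<mu> where "\<mu> = map_pmf (\<lambda>w. \<Sum>j\<in>R. w j) (Pi_pmf R 0 P)"
  define N where "N = nat \<lceil>2 * real r * sqrt n\<rceil>"
  obtain a where a: "1 / 2 \<le> measure_pmf.prob \<mu> {a..<a + N}"
    using Pi_pmf_sum_in_interval_ge_half unfolding \<mu>_def N_def by blast
  have N: "1 \<le> N" "N \<le> 3 * (real r * sqrt n)"
    using one_le_mult_sqrt unfolding N_def by linarith+
  have "1 / (12 * real r * sqrt n) \<le> (1 / 2) ^ 2 / N"
    using N by (simp add: field_simps)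
  also have "\<dots> \<le> measure_pmf.prob \<mu> {a..<a + N} ^ 2 / card {a..<a + N}"
    using a by (simp add: divide_right_mono power_mono)
  also have "\<dots> \<le> measure_pmf.prob (pair_pmf \<mu> \<mu>) {z. fst z = snd z}"
    using N by (intro collision_prob_ge) auto
  finally show ?thesis unfolding \<mu>_def .
qed

end

section \<open>One step of the r-cGA\<close>

lemma set_pos_pmf_subset:
  assumes "1 \<le> r"
  shows "set_pmf (pos_pmf r q) \<subseteq> {..<r}"
proof (cases "(\<forall>j<r. 0 \<le> q j) \<and> (\<Sum>j<r. q j) = 1")
  case True
  define f where "f = (\<lambda>j. if j < r then q j else 0)"
  have f_nonneg: "0 \<le> f j" for j
    using True by (simp add: f_def)
  have "(\<integral>\<^sup>+j. ennreal (f j) \<partial>count_space UNIV) = (\<Sum>j<r. ennreal (f j))"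
    by (rule nn_integral_count_space') (auto simp: f_def)
  also have "\<dots> = ennreal (\<Sum>j<r. f j)"
    using f_nonneg by (simp add: sum_ennreal)
  also have "(\<Sum>j<r. f j) = 1"
    using True by (simp add: f_def)
  finally have "(\<integral>\<^sup>+j. ennreal (f j) \<partial>count_space UNIV) = 1"
    by simp
  then have "set_pmf (embed_pmf f) = {j. f j \<noteq> 0}"
    by (intro set_embed_pmf f_nonneg)
  then show ?thesis
    using True by (auto simp: pos_pmf_def f_def)
next
  case False
  then show ?thesis
    using assms unfolding pos_pmf_def if_not_P[OF False] by simp
qed

definition cga_update :: "real \<Rightarrow> ((nat \<Rightarrow> nat) \<Rightarrow> real) \<Rightarrow> (nat \<Rightarrow> nat \<Rightarrow> real)
    \<Rightarrow> (nat \<Rightarrow> nat) \<times> (nat \<Rightarrow> nat) \<Rightarrow> (nat \<Rightarrow> nat \<Rightarrow> real)" where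
  "cga_update K f p = (\<lambda>(x0, y0).
     let x = (if f x0 < f y0 then y0 else x0);
         y = (if f x0 < f y0 then x0 else y0)
     in (\<lambda>i j. p i j + ((if x i = j then 1 else 0) - (if y i = j then 1 else 0)) / K))"

lemma cga_step_eq_map_pmf:
  "cga_step n r K f p = map_pmf (cga_update K f p) (pair_pmf (sample_pmf n r p) (sample_pmf n r p))"
  unfolding cga_step_def pair_pmf_def map_pmf_def cga_update_def
  by (simp add: bind_assoc_pmf bind_return_pmf)

lemma gonemax_eq:
  assumes "i < n"
  shows "gonemax n x = real (x i + (\<Sum>j\<in>{..<n} - {i}. x j))"
proof -
  have "{..<n} = insert i ({..<n} - {i})" using assms by auto
  then show ?thesis
    unfolding gonemax_def by (metis finite_Diff finite_lessThan Diff_iff insertI1 sum.insert of_nat_add of_nat_sum)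
qed

lemma cga_update_top_freq:
  assumes "i < n"
  shows "cga_update K (gonemax n) p (x, y) i (r - 1)
    = p i (r - 1) + duel_gain r ((x i, y i), (\<Sum>j\<in>{..<n} - {i}. x j, \<Sum>j\<in>{..<n} - {i}. y j)) / K"
proof -
  have "(gonemax n x < gonemax n y)
      = (x i + (\<Sum>j\<in>{..<n} - {i}. x j) < y i + (\<Sum>j\<in>{..<n} - {i}. y j))"
    unfolding gonemax_eq[OF assms] by (rule of_nat_less_iff)
  then show ?thesis
    by (simp add: cga_update_def duel_gain_def top_indicator_def Let_def diff_divide_distrib)
qed

lemma sample_pmf_split:
  assumes "i < n"
  shows "map_pmf (\<lambda>x. (x i, \<Sum>j\<in>{..<n} - {i}. x j)) (sample_pmf n r p)
    = pair_pmf (pos_pmf r (p i))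
        (map_pmf (\<lambda>w. \<Sum>j\<in>{..<n} - {i}. w j) (Pi_pmf ({..<n} - {i}) 0 (\<lambda>j. pos_pmf r (p j))))"
proof -
  have "sample_pmf n r p = map_pmf (\<lambda>(c, w). w(i := c))
      (pair_pmf (pos_pmf r (p i)) (Pi_pmf ({..<n} - {i}) 0 (\<lambda>j. pos_pmf r (p j))))"
    using Pi_pmf_insert[of "{..<n} - {i}" i 0 "\<lambda>j. pos_pmf r (p j)"] assms
    by (simp add: sample_pmf_def insert_absorb)
  moreover have "(\<Sum>j\<in>{..<n} - {i}. (w(i := c)) j) = (\<Sum>j\<in>{..<n} - {i}. w j)"
    for w :: "nat \<Rightarrow> nat" and c
    by (rule sum.cong) auto
  ultimately have "map_pmf (\<lambda>x. (x i, \<Sum>j\<in>{..<n} - {i}. x j)) (sample_pmf n r p)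
      = map_pmf (\<lambda>(c, w). (id c, \<Sum>j\<in>{..<n} - {i}. w j))
          (pair_pmf (pos_pmf r (p i)) (Pi_pmf ({..<n} - {i}) 0 (\<lambda>j. pos_pmf r (p j))))"
    by (simp add: map_pmf_comp case_prod_beta')
  then show ?thesis
    unfolding map_pair by simp
qed

lemma map_pmf_duel_pair_sample_pmf:
  assumes i: "i < n"
  shows "map_pmf (\<lambda>(x, y). ((x i, y i), (\<Sum>j\<in>{..<n} - {i}. x j, \<Sum>j\<in>{..<n} - {i}. y j)))
      (pair_pmf (sample_pmf n r p) (sample_pmf n r p))
    = pair_pmf (pair_pmf (pos_pmf r (p i)) (pos_pmf r (p i)))
        (pair_pmf (map_pmf (\<lambda>w. \<Sum>j\<in>{..<n} - {i}. w j) (Pi_pmf ({..<n} - {i}) 0 (\<lambda>j. pos_pmf r (p j))))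
          (map_pmf (\<lambda>w. \<Sum>j\<in>{..<n} - {i}. w j) (Pi_pmf ({..<n} - {i}) 0 (\<lambda>j. pos_pmf r (p j)))))"
proof -
  have "map_pmf (\<lambda>(x, y). ((x i, y i), (\<Sum>j\<in>{..<n} - {i}. x j, \<Sum>j\<in>{..<n} - {i}. y j)))
      (pair_pmf (sample_pmf n r p) (sample_pmf n r p))
    = map_pmf (\<lambda>((a, b), (c, d)). ((a, c), (b, d)))
        (pair_pmf (map_pmf (\<lambda>x. (x i, \<Sum>j\<in>{..<n} - {i}. x j)) (sample_pmf n r p))
          (map_pmf (\<lambda>x. (x i, \<Sum>j\<in>{..<n} - {i}. x j)) (sample_pmf n r p)))"
    by (simp add: map_pmf_comp map_pair[symmetric] case_prod_beta')
  then show ?thesis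
    by (simp only: sample_pmf_split[OF i] pair_pmf_interchange)
qed

lemma exp_minus_one_le_two_mult:
  fixes l :: real
  assumes "0 \<le> l" "l \<le> 1"
  shows "exp l - 1 \<le> 2 * l"
proof -
  have "exp l \<le> 1 + l + l\<^sup>2"
    using assms by (intro exp_bound)
  moreover have "l\<^sup>2 \<le> l"
    using assms by (simp add: power2_eq_square mult_left_le)
  ultimately show ?thesis by linarith
qed

lemma collision_prob_other_positions_ge:
  fixes n r :: nat and p :: "nat \<Rightarrow> nat \<Rightarrow> real"
  assumes n: "2 \<le> n" and i: "i < n" and r: "2 \<le> r"
  defines "\<mu> \<equiv> map_pmf (\<lambda>w. \<Sum>j\<in>{..<n} - {i}. w j) (Pi_pmf ({..<n} - {i}) 0 (\<lambda>j. pos_pmf r (p j)))"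
  shows "1 / (12 * real r * sqrt n) \<le> measure_pmf.prob (pair_pmf \<mu> \<mu>) {s. fst s = snd s}"
  unfolding \<mu>_def
proof (rule collision_prob_Pi_pmf_sum_ge)
  have "(if i = 0 then 1 else 0) \<in> {..<n} - {i}" using n by auto
  then show "{..<n} - {i} \<noteq> {}" by blast
qed (use r in \<open>auto simp: set_pos_pmf_subset card_Diff_singleton_if\<close>)

lemma cga_step_exp_top_freq_le:
  fixes n r :: nat
  assumes n: "2 \<le> n" and i: "i < n" and r: "2 \<le> r" and K: "0 < K"
  defines "l \<equiv> 1 / (12 * real r * sqrt n)"
  shows "(\<integral>\<^sup>+q. ennreal (exp (- l * K * q i (r - 1))) \<partial>cga_step n r K (gonemax n) p)
    \<le> ennreal (exp (- l * K * p i (r - 1)))"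
proof -
  define R where "R = {..<n} - {i}"
  define \<mu> where "\<mu> = map_pmf (\<lambda>w. \<Sum>j\<in>R. w j) (Pi_pmf R 0 (\<lambda>j. pos_pmf r (p j)))"
  define Y where "Y = pair_pmf (pair_pmf (pos_pmf r (p i)) (pos_pmf r (p i))) (pair_pmf \<mu> \<mu>)"
  define duel :: "(nat \<Rightarrow> nat) \<times> (nat \<Rightarrow> nat) \<Rightarrow> (nat \<times> nat) \<times> (nat \<times> nat)"
    where "duel = (\<lambda>(x, y). ((x i, y i), (\<Sum>j\<in>R. x j, \<Sum>j\<in>R. y j)))"
  have "1 \<le> 12 * real r * sqrt n"
    using n r mult_mono[of 1 "12 * real r" 1 "sqrt n"] by simp
  then have l: "0 \<le> l" "l \<le> 1"
    by (simp_all add: l_def)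
  have Y: "map_pmf duel (pair_pmf (sample_pmf n r p) (sample_pmf n r p)) = Y"
    unfolding duel_def Y_def \<mu>_def R_def by (rule map_pmf_duel_pair_sample_pmf[OF i])
  have expectation_le_1: "measure_pmf.expectation Y (\<lambda>z. exp (- l * duel_gain r z)) \<le> 1"
    unfolding Y_def
  proof (rule expectation_exp_duel_gain_le_1)
    have "l \<le> measure_pmf.prob (pair_pmf \<mu> \<mu>) {s. fst s = snd s}"
      unfolding l_def \<mu>_def R_def by (rule collision_prob_other_positions_ge[OF n i r])
    then show "exp l - 1 \<le> 2 * measure_pmf.prob (pair_pmf \<mu> \<mu>) {s. fst s = snd s}"
      using exp_minus_one_le_two_mult[OF l] by linarith
  qed (use l r in \<open>simp_all add: set_pos_pmf_subset\<close>)
  have "(\<integral>\<^sup>+q. ennreal (exp (- l * K * q i (r - 1))) \<partial>cga_step n r K (gonemax n) p)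
      = (\<integral>\<^sup>+z. ennreal (exp (- l * K * p i (r - 1))) * ennreal (exp (- l * duel_gain r (duel z)))
          \<partial>pair_pmf (sample_pmf n r p) (sample_pmf n r p))"
    unfolding cga_step_eq_map_pmf nn_integral_map_pmf
  proof (intro nn_integral_cong, clarify)
    fix x y :: "nat \<Rightarrow> nat"
    have update: "cga_update K (gonemax n) p (x, y) i (r - 1) = p i (r - 1) + duel_gain r (duel (x, y)) / K"
      using cga_update_top_freq[OF i] by (simp add: duel_def R_def)
    have exponent: "- l * K * cga_update K (gonemax n) p (x, y) i (r - 1)
        = - l * K * p i (r - 1) + - l * duel_gain r (duel (x, y))"
      unfolding update using K by (simp add: field_simps)
    show "ennreal (exp (- l * K * cga_update K (gonemax n) p (x, y) i (r - 1)))
        = ennreal (exp (- l * K * p i (r - 1))) * ennreal (exp (- l * duel_gain r (duel (x, y))))"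
      unfolding exponent exp_add by (intro ennreal_mult) auto
  qed
  also have "\<dots> = ennreal (exp (- l * K * p i (r - 1))) * (\<integral>\<^sup>+z. ennreal (exp (- l * duel_gain r z)) \<partial>Y)"
    by (simp add: nn_integral_cmult Y[symmetric])
  also have "(\<integral>\<^sup>+z. ennreal (exp (- l * duel_gain r z)) \<partial>Y)
      = ennreal (measure_pmf.expectation Y (\<lambda>z. exp (- l * duel_gain r z)))"
    by (intro nn_integral_eq_integral integrable_measure_pmf_bounded[OF abs_exp_duel_gain_le[OF l(1)]])
      simp
  also have "ennreal (exp (- l * K * p i (r - 1))) * \<dots> \<le> ennreal (exp (- l * K * p i (r - 1)))"
    using expectation_le_1 by (intro mult_left_le) simp_all
  finally show ?thesis .
qed

lemma nn_integral_cga_run_le: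
  assumes "\<And>q. (\<integral>\<^sup>+q'. \<Phi> q' \<partial>cga_step n r K f q) \<le> \<Phi> q"
  shows "(\<integral>\<^sup>+q. \<Phi> q \<partial>cga_run n r K f p t) \<le> \<Phi> p"
proof (induction t)
  case (Suc t)
  have "(\<integral>\<^sup>+q. \<Phi> q \<partial>cga_run n r K f p (Suc t))
      = (\<integral>\<^sup>+q. (\<integral>\<^sup>+q'. \<Phi> q' \<partial>cga_step n r K f q) \<partial>cga_run n r K f p t)"
    by simp
  also have "\<dots> \<le> (\<integral>\<^sup>+q. \<Phi> q \<partial>cga_run n r K f p t)"
    by (intro nn_integral_mono assms)
  finally show ?case
    using Suc.IH by (rule order_trans)
qed simp

lemma map_pmf_last_cga_traj: "map_pmf last (cga_traj n r K f p t) = cga_run n r K f p t"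
proof (induction t)
  case (Suc t)
  have "map_pmf last (cga_traj n r K f p (Suc t))
      = bind_pmf (map_pmf last (cga_traj n r K f p t)) (cga_step n r K f)"
    by (simp add: map_bind_pmf map_pmf_comp bind_map_pmf)
  then show ?case
    using Suc.IH by simp
qed simp

lemma emeasure_cga_traj_ever_le:
  "emeasure (cga_traj n r K f p t) {ps. \<exists>q\<in>set ps. B q}
     \<le> (\<Sum>s\<le>t. emeasure (cga_run n r K f p s) {q. B q})"
proof (induction t)
  case 0
  then show ?case by (simp add: indicator_def)
next
  case (Suc t)
  define T where "T = cga_traj n r K f p t"
  define E where "E = {ps. \<exists>q\<in>set ps. B q}"
  have extend: "emeasure (map_pmf (\<lambda>q. ps @ [q]) (cga_step n r K f (last ps))) E
      \<le> indicator E ps + emeasure (cga_step n r K f (last ps)) {q. B q}" for ps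
  proof (cases "ps \<in> E")
    case True
    then show ?thesis
      by (simp add: measure_pmf.emeasure_le_1 add_increasing2)
  next
    case False
    then have "(\<lambda>q. ps @ [q]) -` E = {q. B q}" by (auto simp: E_def)
    then show ?thesis using False by simp
  qed
  have "emeasure (cga_traj n r K f p (Suc t)) E
      = (\<integral>\<^sup>+ps. emeasure (map_pmf (\<lambda>q. ps @ [q]) (cga_step n r K f (last ps))) E \<partial>T)"
    by (simp add: T_def)
  also have "\<dots> \<le> (\<integral>\<^sup>+ps. indicator E ps + emeasure (cga_step n r K f (last ps)) {q. B q} \<partial>T)"
    by (intro nn_integral_mono extend)
  also have "\<dots> = emeasure T E + (\<integral>\<^sup>+ps. emeasure (cga_step n r K f (last ps)) {q. B q} \<partial>T)"
    by (simp add: nn_integral_add)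
  also have "(\<integral>\<^sup>+ps. emeasure (cga_step n r K f (last ps)) {q. B q} \<partial>T)
      = emeasure (cga_run n r K f p (Suc t)) {q. B q}"
    by (simp add: T_def map_pmf_last_cga_traj[symmetric] bind_map_pmf)
  also have "emeasure T E \<le> (\<Sum>s\<le>t. emeasure (cga_run n r K f p s) {q. B q})"
    using Suc.IH by (simp add: T_def E_def)
  finally show ?case
    by (simp add: E_def add_right_mono)
qed

lemma emeasure_cga_run_top_freq_below_le:
  fixes n r :: nat
  assumes "2 \<le> n" "i < n" "2 \<le> r" "0 < K"
  shows "emeasure (cga_run n r K (gonemax n) p t) {q. q i (r - 1) < \<theta>}
    \<le> ennreal (exp (- K * (p i (r - 1) - \<theta>) / (12 * real r * sqrt n)))"
proof -
  define l where "l = 1 / (12 * real r * sqrt n)"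
  define \<Phi> where "\<Phi> q = ennreal (exp (- l * K * q i (r - 1)))" for q :: "nat \<Rightarrow> nat \<Rightarrow> real"
  have l: "0 \<le> l" by (simp add: l_def)
  have below_le: "indicator {q. q i (r - 1) < \<theta>} q \<le> ennreal (exp (l * K * \<theta>)) * \<Phi> q" for q
  proof -
    have "1 \<le> exp (l * K * \<theta>) * exp (- l * K * q i (r - 1))" if "q i (r - 1) < \<theta>"
      using that l assms(4) by (simp add: mult_left_mono flip: exp_add)
    then show ?thesis
      by (auto simp: indicator_def \<Phi>_def ennreal_mult[symmetric] ennreal_leI)
  qed
  have "emeasure (cga_run n r K (gonemax n) p t) {q. q i (r - 1) < \<theta>}
      = (\<integral>\<^sup>+q. indicator {q. q i (r - 1) < \<theta>} q \<partial>cga_run n r K (gonemax n) p t)"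
    by simp
  also have "\<dots> \<le> (\<integral>\<^sup>+q. ennreal (exp (l * K * \<theta>)) * \<Phi> q \<partial>cga_run n r K (gonemax n) p t)"
    by (rule nn_integral_mono) (rule below_le)
  also have "\<dots> = ennreal (exp (l * K * \<theta>)) * (\<integral>\<^sup>+q. \<Phi> q \<partial>cga_run n r K (gonemax n) p t)"
    by (rule nn_integral_cmult) simp
  also have "\<dots> \<le> ennreal (exp (l * K * \<theta>)) * \<Phi> p"
    unfolding \<Phi>_def l_def using assms
    by (intro mult_left_mono nn_integral_cga_run_le cga_step_exp_top_freq_le) simp_all
  also have "\<dots> = ennreal (exp (l * K * \<theta> + - l * K * p i (r - 1)))"
    unfolding \<Phi>_def exp_add by (intro ennreal_mult[symmetric]) simp_all
  also have "l * K * \<theta> + - l * K * p i (r - 1) = - K * (p i (r - 1) - \<theta>) / (12 * real r * sqrt n)"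
    by (simp add: l_def field_split_simps)
  finally show ?thesis .
qed

lemma cga_traj_prob_top_freq_below_le:
  fixes n r :: nat
  assumes "2 \<le> n" "i < n" "2 \<le> r" "0 < K"
  shows "measure_pmf.prob (cga_traj n r K (gonemax n) p T) {ps. \<exists>q\<in>set ps. q i (r - 1) < \<theta>}
    \<le> (T + 1) * exp (- K * (p i (r - 1) - \<theta>) / (12 * real r * sqrt n))"
proof -
  have "emeasure (cga_traj n r K (gonemax n) p T) {ps. \<exists>q\<in>set ps. q i (r - 1) < \<theta>}
      \<le> (\<Sum>s\<le>T. emeasure (cga_run n r K (gonemax n) p s) {q. q i (r - 1) < \<theta>})"
    by (rule emeasure_cga_traj_ever_le)
  also have "\<dots> \<le> (\<Sum>s\<le>T. ennreal (exp (- K * (p i (r - 1) - \<theta>) / (12 * real r * sqrt n))))"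
    using assms by (intro sum_mono emeasure_cga_run_top_freq_below_le)
  also have "\<dots> = ennreal (\<Sum>s\<le>T. exp (- K * (p i (r - 1) - \<theta>) / (12 * real r * sqrt n)))"
    by (rule sum_ennreal) simp
  also have "(\<Sum>s\<le>T. exp (- K * (p i (r - 1) - \<theta>) / (12 * real r * sqrt n)))
      = (T + 1) * exp (- K * (p i (r - 1) - \<theta>) / (12 * real r * sqrt n))"
    by simp
  finally show ?thesis
    by (simp add: measure_pmf.emeasure_eq_measure add.commute)
qed

section \<open>Choice of the constants\<close>

lemma mult_power_le_exp:
  fixes E :: real and n m :: nat
  assumes n: "2 \<le> n" and E: "29 * real (m + 10) * ln n \<le> E"
  shows "3 * E * real n ^ m \<le> exp (11 * E / 288)"
proof -
  have ln_n: "0 < ln n" using n by simp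
  have E_exp: "3 * E \<le> 864 * exp (E / 288)"
    using exp_ge_add_one_self[of "E / 288"] by linarith
  have n_exp: "864 * real n ^ m \<le> exp (10 * E / 288)"
  proof -
    have "(864::real) \<le> 2 ^ 10" by simp
    also have "\<dots> \<le> real n ^ 10" using n by (intro power_mono) auto
    finally have "864 * real n ^ m \<le> real n ^ 10 * real n ^ m"
      by (rule mult_right_mono) simp
    also have "\<dots> = real n ^ (m + 10)"
      by (simp add: power_add mult.commute)
    also have "\<dots> = exp (real (m + 10) * ln n)"
      unfolding exp_of_nat_mult using n by simp
    also have "\<dots> \<le> exp (10 * E / 288)"
    proof -
      have "29 * (real (m + 10) * ln n) \<le> E" using E by (simp only: mult.assoc)
      moreover have "0 \<le> real (m + 10) * ln n" using ln_n by simp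
      ultimately have "real (m + 10) * ln n \<le> 10 * E / 288" by linarith
      then show ?thesis by simp
    qed
    finally show ?thesis .
  qed
  have "3 * E * real n ^ m \<le> 864 * exp (E / 288) * real n ^ m"
    using E_exp by (rule mult_right_mono) simp
  also have "\<dots> = exp (E / 288) * (864 * real n ^ m)"
    by simp
  also have "\<dots> \<le> exp (E / 288) * exp (10 * E / 288)"
    using n_exp by (rule mult_left_mono) simp
  also have "\<dots> = exp (11 * E / 288)"
    by (simp flip: exp_add)
  finally show ?thesis .
qed

lemma cga_horizon_le:
  fixes n r a :: nat and K :: real
  assumes n: "2 \<le> n" and r: "2 \<le> r" and a: "1 \<le> a" and rn: "real r \<le> real n ^ a"
    and K: "real r ^ 2 * sqrt n \<le> K"
  shows "real (Suc (nat \<lfloor>K * r * sqrt n * (ln r + ln n)\<rfloor>))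
    \<le> 3 * (K / (real r ^ 2 * sqrt n)) * real n ^ (4 * a + 1)"
proof -
  define E where "E = K / (real r ^ 2 * sqrt n)"
  have pos: "0 < real r ^ 2 * sqrt n" using n r by simp
  have E: "1 \<le> E" using K pos by (simp add: E_def)
  have n_le: "real n \<le> real n ^ a" using a n by (simp add: power_increasing[of 1 a, simplified])
  have "ln r \<le> real r - 1" "ln n \<le> real n - 1"
    using n r by (simp_all add: ln_le_minus_one)
  then have "ln r + ln n \<le> 2 * real n ^ a"
    using rn n_le by linarith
  moreover have "real r ^ 3 \<le> (real n ^ a) ^ 3" using rn by (intro power_mono) auto
  moreover have "K * r * sqrt n = E * real r ^ 3 * n"
  proof -
    have "E * real r ^ 3 * n = K * r * (n / sqrt n)"
      using pos by (simp add: E_def power2_eq_square power3_eq_cube field_simps)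
    then show ?thesis by (simp add: real_div_sqrt)
  qed
  moreover have ln_nonneg: "0 \<le> ln r + ln n" using n r by simp
  ultimately have "K * r * sqrt n * (ln r + ln n) \<le> E * (real n ^ a) ^ 3 * n * (2 * real n ^ a)"
    using E by (simp add: mult_mono mult_left_mono)
  also have "\<dots> = 2 * E * real n ^ (4 * a + 1)"
    by (simp add: power_add power_mult_distrib mult_ac eval_nat_numeral flip: power_mult)
  finally have horizon: "K * r * sqrt n * (ln r + ln n) \<le> 2 * E * real n ^ (4 * a + 1)" .
  have "real (nat \<lfloor>K * r * sqrt n * (ln r + ln n)\<rfloor>) \<le> K * r * sqrt n * (ln r + ln n)"
    using K pos ln_nonneg by (intro of_nat_floor) simp
  moreover have "1 \<le> E * real n ^ (4 * a + 1)"
  proof -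
    have "1 \<le> real n ^ (4 * a + 1)" using n by (intro one_le_power) simp
    then show ?thesis using E mult_mono[of 1 E 1 "real n ^ (4 * a + 1)"] by simp
  qed
  ultimately show ?thesis
    using horizon unfolding E_def[symmetric] of_nat_Suc by linarith
qed

lemma le_power_if_le_mult_powr:
  fixes n :: nat and A D x :: real
  assumes x: "x \<le> A * real n powr D" and A: "A \<le> real n" and n: "1 \<le> n"
  shows "x \<le> real n ^ (nat \<lceil>max D 0\<rceil> + 1)"
proof -
  have "real n powr D \<le> real n powr real (nat \<lceil>max D 0\<rceil>)"
    using n by (intro powr_mono) linarith+
  also have "\<dots> = real n ^ nat \<lceil>max D 0\<rceil>"
    by (rule powr_realpow) (use n in simp)
  finally have "A * real n powr D \<le> real n * real n ^ nat \<lceil>max D 0\<rceil>"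
    using A by (intro mult_mono) auto
  then show ?thesis
    using x by simp
qed

lemma cga_traj_prob_top_freq_drop_le_exp:
  fixes n r :: nat
  assumes n: "2 \<le> n" and i: "i < n" and r: "2 \<le> r" and K: "0 < K"
    and pk: "k / r \<le> p i (r - 1)"
  shows "measure_pmf.prob (cga_traj n r K (gonemax n) p T)
      {ps. \<exists>q\<in>set ps. q i (r - 1) < k / r - 1 / (2 * real r)}
    \<le> (real T + 1) * exp (- (K / (24 * real r ^ 2 * sqrt n)))"
proof -
  have "K / (24 * real r ^ 2 * sqrt n) = K * (1 / (2 * real r)) / (12 * real r * sqrt n)"
    using r by (simp add: power2_eq_square)
  also have "\<dots> \<le> K * (p i (r - 1) - (k / r - 1 / (2 * real r))) / (12 * real r * sqrt n)"
    using pk K by (intro divide_right_mono mult_left_mono) auto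
  finally have "exp (- K * (p i (r - 1) - (k / r - 1 / (2 * real r))) / (12 * real r * sqrt n))
      \<le> exp (- (K / (24 * real r ^ 2 * sqrt n)))"
    by simp
  then have "(real T + 1) * exp (- K * (p i (r - 1) - (k / r - 1 / (2 * real r))) / (12 * real r * sqrt n))
      \<le> (real T + 1) * exp (- (K / (24 * real r ^ 2 * sqrt n)))"
    by (rule mult_left_mono) simp
  with cga_traj_prob_top_freq_below_le[OF n i r K] show ?thesis
    by (rule order_trans)
qed

lemma le_of_mult_ln_le:
  fixes n :: nat and b x K :: real
  assumes n: "2 \<le> n" and K: "b * x * ln n \<le> K" and b: "3 / 2 \<le> b" and x: "0 \<le> x"
  shows "x \<le> K"
proof -
  have "ln 2 \<le> ln (real n)" using n by simp
  then have "1 \<le> b * ln n"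
    using ln2_ge_two_thirds b mult_mono[of "3 / 2" b "2 / 3" "ln n"] by simp
  then have "x \<le> b * ln n * x"
    using x mult_right_mono[of 1 "b * ln n" x] by simp
  then show ?thesis
    using K by (simp add: mult_ac)
qed

lemma cga_traj_prob_top_freq_drop_le:
  fixes n r a :: nat and K k :: real
  assumes n: "2 \<le> n" and i: "i < n" and r: "2 \<le> r" and K: "0 < K"
    and a: "1 \<le> a" and rn: "real r \<le> real n ^ a"
    and cK: "29 * real (4 * a + 11) * real r ^ 2 * sqrt n * ln n \<le> K"
    and pk: "k / r \<le> p i (r - 1)"
  shows "measure_pmf.prob (cga_traj n r K (gonemax n) p (nat \<lfloor>K * r * sqrt n * (ln r + ln n)\<rfloor>))
      {ps. \<exists>q\<in>set ps. q i (r - 1) < k / r - 1 / (2 * real r)}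
    \<le> real n powr (- (K / (288 * real r ^ 2 * sqrt n * ln n)))"
proof -
  define E where "E = K / (real r ^ 2 * sqrt n)"
  define T where "T = nat \<lfloor>K * r * sqrt n * (ln r + ln n)\<rfloor>"
  have pos: "0 < real r ^ 2 * sqrt n" "0 < ln n" using n r by simp_all
  have E_ge: "29 * real (4 * a + 1 + 10) * ln n \<le> E"
    using cK pos by (simp add: E_def field_simps)
  have E_div: "E / 24 = K / (24 * real r ^ 2 * sqrt n)"
    by (simp add: E_def)
  have "29 * real (4 * a + 11) * (real r ^ 2 * sqrt n) * ln n \<le> K"
    using cK by (simp only: mult.assoc)
  with n have "real r ^ 2 * sqrt n \<le> K"
    by (rule le_of_mult_ln_le) simp_all
  have "measure_pmf.prob (cga_traj n r K (gonemax n) p T) {ps. \<exists>q\<in>set ps. q i (r - 1) < k / r - 1 / (2 * real r)}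
      \<le> (real T + 1) * exp (- (E / 24))"
    unfolding E_div by (rule cga_traj_prob_top_freq_drop_le_exp[where p = p and i = i, OF n i r K pk])
  also have "\<dots> \<le> 3 * E * real n ^ (4 * a + 1) * exp (- (E / 24))"
    using cga_horizon_le[OF n r a rn \<open>real r ^ 2 * sqrt n \<le> K\<close>]
    by (intro mult_right_mono) (simp_all add: T_def E_def)
  also have "\<dots> \<le> exp (11 * E / 288) * exp (- (E / 24))"
    using mult_power_le_exp[OF n E_ge] by (intro mult_right_mono) simp_all
  also have "\<dots> = real n powr (- (K / (288 * real r ^ 2 * sqrt n * ln n)))"
    using n pos by (simp add: powr_def E_def field_simps flip: exp_add)
  finally show ?thesis
    by (simp only: T_def)
qed

theorem lemma1:
  fixes A D :: real
  shows "\<exists>c c' :: real. \<exists>n0 :: nat. c' > 0 \<and>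
    (\<forall>n r :: nat. \<forall>K k :: real. \<forall>i t :: nat. \<forall>p.
       n \<ge> n0 \<longrightarrow> r \<ge> 2 \<longrightarrow> K > 0 \<longrightarrow> k > 0 \<longrightarrow> i < n \<longrightarrow>
       real r \<le> A * real n powr D \<longrightarrow> K \<le> A * real n powr D \<longrightarrow>
       K \<ge> c * real r ^ 2 * sqrt (real n) * ln (real n) \<longrightarrow>
       p \<in> set_pmf (cga_run n r K (gonemax n) (cga_init r) t) \<longrightarrow>
       p i (r - 1) \<ge> k / real r \<longrightarrow>
       measure_pmf.prob
         (cga_traj n r K (gonemax n) p
            (nat \<lfloor>c' * K * real r * sqrt (real n) * (ln (real r) + ln (real n))\<rfloor>))
         {ps. \<exists>q\<in>set ps. q i (r - 1) < k / real r - 1 / (2 * real r)}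
       \<le> real n powr (- (K / (288 * real r ^ 2 * sqrt (real n) * ln (real n)))))"
proof -
  define a where "a = nat \<lceil>max D 0\<rceil> + 1"
  show ?thesis
  proof (rule exI[of _ "29 * real (4 * a + 11)"], rule exI[of _ 1], rule exI[of _ "max 2 (nat \<lceil>A\<rceil>)"],
      intro conjI allI impI)
    fix n r :: nat and K k :: real and i t :: nat and p
    \<comment> \<open>The drift bound holds from every state.\<close>
    assume n: "max 2 (nat \<lceil>A\<rceil>) \<le> n" and r: "2 \<le> r" and K: "0 < K" and i: "i < n"
      and rA: "real r \<le> A * real n powr D"
      and cK: "29 * real (4 * a + 11) * real r ^ 2 * sqrt (real n) * ln (real n) \<le> K"
      and pk: "k / real r \<le> p i (r - 1)"
    have "real r \<le> real n ^ a"
      unfolding a_def using n by (intro le_power_if_le_mult_powr[OF rA]) linarith+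
    then show "measure_pmf.prob
         (cga_traj n r K (gonemax n) p
            (nat \<lfloor>1 * K * real r * sqrt (real n) * (ln (real r) + ln (real n))\<rfloor>))
         {ps. \<exists>q\<in>set ps. q i (r - 1) < k / real r - 1 / (2 * real r)}
       \<le> real n powr (- (K / (288 * real r ^ 2 * sqrt (real n) * ln (real n))))"
      using cga_traj_prob_top_freq_drop_le[where n = n and i = i and p = p, OF _ i r K _ _ cK pk] n
      by (simp add: a_def)
  qed simp
qed

end
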